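(* Let $S=(n,X,U,f,Y,h,x_0)$, $\widehat{S}=(\widehat{n},\widehat{X},\widehat{U},\widehat{f},\widehat{Y},\widehat{h},\widehat{x}_0)$ and $\widehat{\widehat{S}}=(\widehat{\widehat{n}},\widehat{\widehat{X}},\widehat{\widehat{U}},\widehat{\widehat{f}},\widehat{\widehat{Y}},\widehat{\widehat{h}},\widehat{\widehat{x}}_0)$ be deterministic multi-robot transition systems. If $\widehat{\widehat{S}}$ is an $(\widehat{n},\widehat{\tau})$-illusion of $\widehat{S}$, and $\widehat{S}$ is an $(m,\tau)$-illusion of $S$, then $\widehat{\widehat{S}}$ is an $(m,\tau\cdot\widehat{\tau})$-illusion of $S$.
   Context: A deterministic multi-robot transition system is a 7-tuple $(n,X,U,f,Y,h,x_0)$ where $n$ is a positive integer (the number of robots); $X=X^{(1)}\times\cdots\times X^{(n)}$ is the state space; $U=U^{(1)}\times\cdots\times U^{(n)}$ is the action space; $f:X\times U\to X$ is the transition function given by robot transition functions $f^{(i)}$ via $f(x,(u^{(1)},\dots,u^{(n)}))=(f^{(1)}(x,u^{(1)}),\dots,f^{(n)}(x,u^{(n)}))$; $Y=Y^{(1)}\times\cdots\times Y^{(n)}$ is the observation space; $h:X\to Y$ is given by robot observation functions via $h(x)=(h^{(1)}(x),\dots,h^{(n)}(x))$; and $x_0\in X$ is the initial state. The system evolves in discrete time by $x_{k+1}=f(x_k,u_k)$, $y_k=h(x_k)$. Superscripts in parentheses index robots, subscripts index time. When one system $\widehat{S}$ (the primary system; its quantities carry hats) is used to emulate another system $S$ (the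 secondary system), a robot policy $\widehat{\pi}^{(i)}$ for robot $i$ of $\widehat{S}$ is a function mapping robot $i$'s own action history $\widehat{u}^{(i)}_0,\dots,\widehat{u}^{(i)}_k$, its own observation history $\widehat{y}^{(i)}_0,\dots,\widehat{y}^{(i)}_k$, and the history $x_0,\dots,x_\ell$ of states of the secondary system (where $\ell$ may differ from $k$, as the two systems may run on different time scales) to an action $\widehat{u}^{(i)}_k\in\widehat{U}^{(i)}$. Robot policies in $S$ choose actions of $S$ from histories in the same manner. For systems $S=(n,X,U,f,Y,h,x_0)$ and $\widehat{S}=(\widehat{n},\widehat{X},\widehat{U},\widehat{f},\widehat{Y},\widehat{h},\widehat{x}_0)$ and an integer $0<m\le n$, $\widehat{S}$ is an $m$-illusion of $S$ if there exist (i) robot policies $\widehat{\pi}^{(1)},\dots,\widehat{\pi}^{(\widehat{n})}$ in $\widehat{S}$, (ii) a strictly increasing function $z:\mathbb{Z}^+\to\mathbb{Z}^+$, and (iii) an infinite sequence of functions $\rho_k:\{1,\dots,m\}\to\{1,\dots,\widehat{n}\}$, such that for any robot policies $\pi^{(1)},\dots,\pi^{(n)}$ in $S$, for all $k\ge 0$ and all $1\le i\le m$, $h^{(i)}(x_k)=\widehat{h}^{(\rho_k(i))}(\widehat{x}_{z(k)})$, where $x_k$ is the state trajectory of $S$ and $\widehat{x}$ that of $\widehat{S}$. The tuple $(\widehat{\pi},(\rho_1,\rho_2,\dots),z)$ is called a witness. If $\widehat{S}$ is an $m$-illusion of $S$ with a witness for which the sequence $z(2)-z(1),z(3)-z(2),z(4)-z(3),\dots$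 is bounded above by $\tau$, then it is an $(m,\tau)$-illusion; $\tau$ (an integer) is the slowdown. *)

theory Defs
  imports Main
begin

text \<open>Robots are indexed
 1..n.  A joint state is a function nat => 'x whose component i (1 <= i <= n)
 lies in X^(i); components outside 1..n are fixed to undefined.  Likewise a
 joint action is a function nat => 'u (only components 1..n are used).\<close>

record ('x, 'u, 'y) mrts =
  nr  :: nat
  Xs  :: "nat \<Rightarrow> 'x set"
  Us  :: "nat \<Rightarrow> 'u set"
  fs  :: "nat \<Rightarrow> (nat \<Rightarrow> 'x) \<Rightarrow> 'u \<Rightarrow> 'x"
  Ys  :: "nat \<Rightarrow> 'y set"
  hs  :: "nat \<Rightarrow> (nat \<Rightarrow> 'x) \<Rightarrow> 'y"
  xinit :: "nat \<Rightarrow> 'x"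

definition state_space :: "('x, 'u, 'y) mrts \<Rightarrow> (nat \<Rightarrow> 'x) set" where
  "state_space S = {x. (\<forall>i\<in>{1..nr S}. x i \<in> Xs S i) \<and>
                       (\<forall>i. i \<notin> {1..nr S} \<longrightarrow> x i = undefined)}"

definition mrts_wf :: "('x, 'u, 'y) mrts \<Rightarrow> bool" where
  "mrts_wf S \<longleftrightarrow> 0 < nr S \<and> xinit S \<in> state_space S \<and>
     (\<forall>x\<in>state_space S. \<forall>i\<in>{1..nr S}. \<forall>u\<in>Us S i. fs S i x u \<in> Xs S i) \<and>
     (\<forall>x\<in>state_space S. \<forall>i\<in>{1..nr S}. hs S i x \<in> Ys S i)"

definition step :: "('x, 'u, 'y) mrts \<Rightarrow> (nat \<Rightarrow> 'x) \<Rightarrow> (nat \<Rightarrow> 'u) \<Rightarrow> (nat \<Rightarrow> 'x)" where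
  "step S x u = (\<lambda>i. if i \<in> {1..nr S} then fs S i x (u i) else undefined)"

text \<open>A (generic) robot policy
 maps robot i's own action history u_0..u_{k-1}, its own observation history
 y_0..y_k, and an extra history (of type 'c list, supplied at time k by ctx k)
 to the action u_k.  hist returns (state history x_0..x_k, joint action
 history u_0..u_{k-1}).\<close>
fun hist :: "('x, 'u, 'y) mrts \<Rightarrow> (nat \<Rightarrow> 'u list \<Rightarrow> 'y list \<Rightarrow> 'c list \<Rightarrow> 'u)
             \<Rightarrow> (nat \<Rightarrow> 'c list) \<Rightarrow> nat \<Rightarrow> (nat \<Rightarrow> 'x) list \<times> (nat \<Rightarrow> 'u) list" where
  "hist S \<pi> ctx 0 = ([xinit S], [])"
| "hist S \<pi> ctx (Suc k) =
     (let (xh, uh) = hist S \<pi> ctx k;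
          u = (\<lambda>i. \<pi> i (map (\<lambda>v. v i) uh) (map (hs S i) xh) (ctx k))
      in (xh @ [step S (last xh) u], uh @ [u]))"

definition traj :: "('x, 'u, 'y) mrts \<Rightarrow> (nat \<Rightarrow> 'u list \<Rightarrow> 'y list \<Rightarrow> 'c list \<Rightarrow> 'u)
             \<Rightarrow> (nat \<Rightarrow> 'c list) \<Rightarrow> nat \<Rightarrow> (nat \<Rightarrow> 'x)" where
  "traj S \<pi> ctx k = last (fst (hist S \<pi> ctx k))"

definition sec_policy :: "('x, 'u, 'y) mrts \<Rightarrow> nat \<Rightarrow> ('u list \<Rightarrow> 'y list \<Rightarrow> 'u) \<Rightarrow> bool" where
  "sec_policy S i p \<longleftrightarrow> (\<forall>a b. p a b \<in> Us S i)"

definition sec_traj :: "('x, 'u, 'y) mrts \<Rightarrow> (nat \<Rightarrow> 'u list \<Rightarrow> 'y list \<Rightarrow> 'u) \<Rightarrow> nat \<Rightarrow> (nat \<Rightarrow> 'x)" where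
  "sec_traj S \<pi> = traj S (\<lambda>i a b (c :: unit list). \<pi> i a b) (\<lambda>k. [])"

text \<open>Robot policies of the primary system: additionally take the history
 x_0..x_l of states of the secondary system.\<close>
definition prim_policy :: "('x, 'u, 'y) mrts \<Rightarrow> nat \<Rightarrow> ('u list \<Rightarrow> 'y list \<Rightarrow> (nat \<Rightarrow> 'xs) list \<Rightarrow> 'u) \<Rightarrow> bool" where
  "prim_policy S i p \<longleftrightarrow> (\<forall>a b c. p a b c \<in> Us S i)"

text \<open>Information convention: at primary time k the primary knows the secondary
 states x_0..x_l with l = acc z k the least j with k < z j, i.e. exactly the
 secondary state that it has to match next (no further clairvoyance).\<close>
definition acc :: "(nat \<Rightarrow> nat) \<Rightarrow> nat \<Rightarrow> nat" where
  "acc z k = (LEAST j. k < z j)"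

definition prim_traj :: "('x, 'u, 'y) mrts \<Rightarrow> (nat \<Rightarrow> 'u list \<Rightarrow> 'y list \<Rightarrow> (nat \<Rightarrow> 'xs) list \<Rightarrow> 'u)
     \<Rightarrow> (nat \<Rightarrow> nat) \<Rightarrow> (nat \<Rightarrow> (nat \<Rightarrow> 'xs)) \<Rightarrow> nat \<Rightarrow> (nat \<Rightarrow> 'x)" where
  "prim_traj P \<pi>' z xs = traj P \<pi>' (\<lambda>k. map xs [0..<Suc (acc z k)])"

definition illusion_witness ::
  "nat \<Rightarrow> ('xp, 'up, 'y) mrts \<Rightarrow> ('x, 'u, 'y) mrts
   \<Rightarrow> (nat \<Rightarrow> 'up list \<Rightarrow> 'y list \<Rightarrow> (nat \<Rightarrow> 'x) list \<Rightarrow> 'up)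
   \<Rightarrow> (nat \<Rightarrow> nat \<Rightarrow> nat) \<Rightarrow> (nat \<Rightarrow> nat) \<Rightarrow> bool" where
  "illusion_witness m P S \<pi>' \<rho> z \<longleftrightarrow>
     (\<forall>i\<in>{1..nr P}. prim_policy P i (\<pi>' i)) \<and>
     strict_mono z \<and>
     (\<forall>k. \<forall>i\<in>{1..m}. \<rho> k i \<in> {1..nr P}) \<and>
     (\<forall>\<pi>. (\<forall>i\<in>{1..nr S}. sec_policy S i (\<pi> i)) \<longrightarrow>
        (\<forall>k. \<forall>i\<in>{1..m}.
           hs S i (sec_traj S \<pi> k) =
           hs P (\<rho> k i) (prim_traj P \<pi>' z (sec_traj S \<pi>) (z k))))"

definition is_illusion :: "nat \<Rightarrow> ('xp, 'up, 'y) mrts \<Rightarrow> ('x, 'u, 'y) mrts \<Rightarrow> bool" where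
  "is_illusion m P S \<longleftrightarrow> 0 < m \<and> m \<le> nr S \<and>
     (\<exists>\<pi>' \<rho> z. illusion_witness m P S \<pi>' \<rho> z)"

definition is_illusion_tau :: "nat \<Rightarrow> nat \<Rightarrow> ('xp, 'up, 'y) mrts \<Rightarrow> ('x, 'u, 'y) mrts \<Rightarrow> bool" where
  "is_illusion_tau m \<tau> P S \<longleftrightarrow> 0 < m \<and> m \<le> nr S \<and>
     (\<exists>\<pi>' \<rho> z. illusion_witness m P S \<pi>' \<rho> z \<and>
        (\<forall>j\<ge>1. z (Suc j) - z j \<le> \<tau>))"

end

theory Submission
  imports Defs
begin

text \<open>If \<open>S1\<close> emulates \<open>S\<close> with time map \<open>z\<close> and \<open>S2\<close> emulates \<open>S1\<close> with time map
 \<open>z'\<close>, then \<open>S2\<close> emulates \<open>S\<close> with time map \<open>z' \<circ> z\<close>: the robots of \<open>S2\<close> simulate,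
 from the observed history of \<open>S\<close>, the run of \<open>S1\<close> under its emulating policy and
 feed that run to their own emulating policy.  This is legitimate because the
 primary run is causal: up to secondary time \<open>acc z' t\<close> the simulated run of \<open>S1\<close>
 only needs states of \<open>S\<close> up to \<open>acc (z' \<circ> z) t\<close>.  Observations are relayed
 through the robot maps, and a gap of at most \<open>\<tau>\<close> steps of \<open>z\<close> becomes a gap of at
 most \<open>\<tau> * \<tau>1\<close> steps of \<open>z' \<circ> z\<close>.\<close>

lemma length_fst_hist: "length (fst (hist S \<pi> ctx k)) = Suc k"
  by (induction k) (auto simp: Let_def split: prod.splits)

lemma hist_cong:
  assumes "\<forall>t<k. \<forall>i a b. length b = Suc t \<longrightarrow> \<pi> i a b (ctx t) = \<pi>' i a b (ctx' t)"
  shows "hist S \<pi> ctx k = hist S \<pi>' ctx' k"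
  using assms
proof (induction k)
  case 0
  then show ?case by simp
next
  case (Suc k)
  then have IH: "hist S \<pi> ctx k = hist S \<pi>' ctx' k" by simp
  obtain xh uh where h: "hist S \<pi> ctx k = (xh, uh)" by (cases "hist S \<pi> ctx k") auto
  have "length xh = Suc k" using length_fst_hist[of S \<pi> ctx k] h by simp
  then have "(\<lambda>i. \<pi> i (map (\<lambda>v. v i) uh) (map (hs S i) xh) (ctx k))
      = (\<lambda>i. \<pi>' i (map (\<lambda>v. v i) uh) (map (hs S i) xh) (ctx' k))"
    using Suc.prems by auto
  then show ?case using h IH by (simp add: Let_def)
qed

lemma less_acc: "strict_mono z \<Longrightarrow> k < z (acc z k)"
  unfolding acc_def
  by (rule LeastI[of _ "Suc k"]) (metis Suc_le_lessD strict_mono_imp_increasing)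

lemma acc_le: "k < z j \<Longrightarrow> acc z k \<le> j"
  unfolding acc_def by (rule Least_le)

lemma acc_le_acc_comp:
  assumes "strict_mono z" "strict_mono z'"
  shows "acc z' t \<le> z (acc (z' \<circ> z) t)"
proof -
  have "strict_mono (z' \<circ> z)" using assms by (simp add: strict_mono_def)
  then show ?thesis using less_acc[of "z' \<circ> z" t] by (intro acc_le) simp
qed

lemma prim_traj_cong:
  assumes "\<forall>t<k. \<forall>j\<le>acc z t. xs j = ys j"
  shows "prim_traj P \<pi> z xs k = prim_traj P \<pi> z ys k"
  unfolding prim_traj_def traj_def
  using assms
  by (subst hist_cong[where \<pi>'=\<pi>]) (auto simp del: upt_Suc intro!: arg_cong[where f="\<pi> _ _ _"])

definition induced_policy ::
  "(nat \<Rightarrow> 'u list \<Rightarrow> 'y list \<Rightarrow> (nat \<Rightarrow> 'x) list \<Rightarrow> 'u) \<Rightarrow> (nat \<Rightarrow> nat) \<Rightarrow> (nat \<Rightarrow> (nat \<Rightarrow> 'x))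
   \<Rightarrow> nat \<Rightarrow> 'u list \<Rightarrow> 'y list \<Rightarrow> 'u" where
  "induced_policy \<pi> z xs = (\<lambda>i a b. \<pi> i a b (map xs [0..<Suc (acc z (length b - 1))]))"

lemma sec_traj_induced_policy:
  "sec_traj P (induced_policy \<pi> z xs) = prim_traj P \<pi> z xs"
  unfolding sec_traj_def prim_traj_def traj_def induced_policy_def
  by (rule ext, subst hist_cong[where \<pi>'=\<pi>]) auto

text \<open>The argument \<open>c\<close> is the history of \<open>S\<close> observed so far; it is extended
 arbitrarily (by \<open>nth\<close> beyond its length) to a full trajectory of \<open>S\<close>, on whose
 unobserved part the simulated run of \<open>S1\<close> does not depend.\<close>
definition compose_policy ::
  "('x1, 'u1, 'y) mrts \<Rightarrow> (nat \<Rightarrow> 'u2 list \<Rightarrow> 'y list \<Rightarrow> (nat \<Rightarrow> 'x1) list \<Rightarrow> 'u2)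
   \<Rightarrow> (nat \<Rightarrow> 'u1 list \<Rightarrow> 'y list \<Rightarrow> (nat \<Rightarrow> 'x) list \<Rightarrow> 'u1) \<Rightarrow> (nat \<Rightarrow> nat) \<Rightarrow> (nat \<Rightarrow> nat)
   \<Rightarrow> nat \<Rightarrow> 'u2 list \<Rightarrow> 'y list \<Rightarrow> (nat \<Rightarrow> 'x) list \<Rightarrow> 'u2" where
  "compose_policy S1 \<pi>2 \<pi>1 z z' = (\<lambda>i a b c. \<pi>2 i a b
      (map (prim_traj S1 \<pi>1 z (\<lambda>j. c ! j)) [0..<Suc (acc z' (length b - 1))]))"

lemma prim_traj_compose_policy:
  assumes "strict_mono z" "strict_mono z'"
  shows "prim_traj S2 (compose_policy S1 \<pi>2 \<pi>1 z z') (z' \<circ> z) xs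
       = prim_traj S2 \<pi>2 z' (prim_traj S1 \<pi>1 z xs)"
proof -
  have observed_prefix_suffices:
    "prim_traj S1 \<pi>1 z (\<lambda>j. map xs [0..<Suc (acc (z' \<circ> z) t)] ! j) k = prim_traj S1 \<pi>1 z xs k"
    if "k \<le> acc z' t" for t k
  proof (rule prim_traj_cong, intro allI impI)
    fix t' j assume "t' < k" "j \<le> acc z t'"
    moreover have "acc z t' \<le> acc (z' \<circ> z) t"
      using \<open>t' < k\<close> that acc_le_acc_comp[OF assms, of t] by (intro acc_le) simp
    ultimately show "map xs [0..<Suc (acc (z' \<circ> z) t)] ! j = xs j"
      by (simp del: upt_Suc)
  qed
  show ?thesis
    unfolding prim_traj_def traj_def compose_policy_def
    by (subst hist_cong[where \<pi>'=\<pi>2])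
      (auto simp del: upt_Suc intro!: arg_cong[where f="\<pi>2 _ _ _"] map_cong
        observed_prefix_suffices[unfolded prim_traj_def traj_def])
qed

lemma illusion_witness_comp:
  assumes w1: "illusion_witness m S1 S \<pi>1 \<rho>1 z"
    and w2: "illusion_witness (nr S1) S2 S1 \<pi>2 \<rho>2 z'"
  shows "illusion_witness m S2 S (compose_policy S1 \<pi>2 \<pi>1 z z') (\<lambda>k i. \<rho>2 (z k) (\<rho>1 k i)) (z' \<circ> z)"
  unfolding illusion_witness_def
proof (intro conjI ballI allI impI)
  have "strict_mono z" "strict_mono z'" using w1 w2 by (auto simp: illusion_witness_def)
  then show "strict_mono (z' \<circ> z)" by (simp add: strict_mono_def)
  fix \<pi> k i assume \<pi>: "\<forall>i\<in>{1..nr S}. sec_policy S i (\<pi> i)" and i: "i \<in> {1..m}"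
  define xs where "xs = sec_traj S \<pi>"
  have "hs S i (xs k) = hs S1 (\<rho>1 k i) (prim_traj S1 \<pi>1 z xs (z k))"
    using w1 \<pi> i unfolding illusion_witness_def xs_def by blast
  also have "\<dots> = hs S2 (\<rho>2 (z k) (\<rho>1 k i)) (prim_traj S2 \<pi>2 z' (prim_traj S1 \<pi>1 z xs) (z' (z k)))"
  proof -
    have "\<forall>i\<in>{1..nr S1}. sec_policy S1 i (induced_policy \<pi>1 z xs i)"
      using w1 by (auto simp: illusion_witness_def prim_policy_def sec_policy_def induced_policy_def)
    moreover have "\<rho>1 k i \<in> {1..nr S1}" using w1 i unfolding illusion_witness_def by blast
    ultimately have "hs S1 (\<rho>1 k i) (sec_traj S1 (induced_policy \<pi>1 z xs) (z k))
        = hs S2 (\<rho>2 (z k) (\<rho>1 k i))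
            (prim_traj S2 \<pi>2 z' (sec_traj S1 (induced_policy \<pi>1 z xs)) (z' (z k)))"
      using w2 unfolding illusion_witness_def by blast
    then show ?thesis by (simp only: sec_traj_induced_policy)
  qed
  finally show "hs S i (sec_traj S \<pi> k) = hs S2 (\<rho>2 (z k) (\<rho>1 k i))
      (prim_traj S2 (compose_policy S1 \<pi>2 \<pi>1 z z') (z' \<circ> z) (sec_traj S \<pi>) ((z' \<circ> z) k))"
    using \<open>strict_mono z\<close> \<open>strict_mono z'\<close> by (simp add: prim_traj_compose_policy xs_def)
next
  fix i assume "i \<in> {1..nr S2}"
  then show "prim_policy S2 i (compose_policy S1 \<pi>2 \<pi>1 z z' i)"
    using w2 by (auto simp: illusion_witness_def prim_policy_def compose_policy_def)
next
  fix k i assume "i \<in> {1..m}"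
  then show "\<rho>2 (z k) (\<rho>1 k i) \<in> {1..nr S2}"
    using w1 w2 unfolding illusion_witness_def by blast
qed

lemma diff_le_mult_if_increments_le:
  fixes z :: "nat \<Rightarrow> nat"
  assumes "\<forall>j\<ge>1. z (Suc j) - z j \<le> c" "mono z" "1 \<le> b"
  shows "z (b + d) - z b \<le> c * d"
proof (induction d)
  case 0
  then show ?case by simp
next
  case (Suc d)
  have "z b \<le> z (b + d)" "z (b + d) \<le> z (Suc (b + d))"
    using \<open>mono z\<close> by (simp_all add: monoD)
  moreover have "z (Suc (b + d)) - z (b + d) \<le> c" using assms(1,3) by simp
  ultimately show ?case using Suc by simp
qed

lemma increments_comp_le:
  fixes z z' :: "nat \<Rightarrow> nat"
  assumes "strict_mono z" "strict_mono z'"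
    and "\<forall>j\<ge>1. z (Suc j) - z j \<le> \<tau>" "\<forall>j\<ge>1. z' (Suc j) - z' j \<le> \<tau>1"
  shows "\<forall>j\<ge>1. (z' \<circ> z) (Suc j) - (z' \<circ> z) j \<le> \<tau> * \<tau>1"
proof (intro allI impI)
  fix j :: nat assume "1 \<le> j"
  then have "1 \<le> z j" using strict_mono_imp_increasing[OF assms(1), of j] by simp
  have "z j \<le> z (Suc j)" using assms(1) by (simp add: strict_mono_less_eq)
  have "z' (z j + (z (Suc j) - z j)) - z' (z j) \<le> \<tau>1 * (z (Suc j) - z j)"
    using diff_le_mult_if_increments_le[OF assms(4) strict_mono_mono[OF assms(2)] \<open>1 \<le> z j\<close>] .
  also have "\<dots> \<le> \<tau>1 * \<tau>" using assms(3) \<open>1 \<le> j\<close> by simp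
  finally show "(z' \<circ> z) (Suc j) - (z' \<circ> z) j \<le> \<tau> * \<tau>1"
    using \<open>z j \<le> z (Suc j)\<close> by (simp add: mult.commute)
qed

theorem theorem2:
  fixes S :: "('x1, 'u1, 'y) mrts"
    and S1 :: "('x2, 'u2, 'y) mrts"
    and S2 :: "('x3, 'u3, 'y) mrts"
    and m \<tau> \<tau>1 :: nat
  assumes "mrts_wf S" and "mrts_wf S1" and "mrts_wf S2"
    and "is_illusion_tau (nr S1) \<tau>1 S2 S1"
    and "is_illusion_tau m \<tau> S1 S"
  shows "is_illusion_tau m (\<tau> * \<tau>1) S2 S"
proof -
  obtain \<pi>1 \<rho>1 z where w1: "illusion_witness m S1 S \<pi>1 \<rho>1 z"
    and slow1: "\<forall>j\<ge>1. z (Suc j) - z j \<le> \<tau>" and m: "0 < m" "m \<le> nr S"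
    using assms(5) unfolding is_illusion_tau_def by blast
  obtain \<pi>2 \<rho>2 z' where w2: "illusion_witness (nr S1) S2 S1 \<pi>2 \<rho>2 z'"
    and slow2: "\<forall>j\<ge>1. z' (Suc j) - z' j \<le> \<tau>1"
    using assms(4) unfolding is_illusion_tau_def by blast
  have "strict_mono z" "strict_mono z'" using w1 w2 by (auto simp: illusion_witness_def)
  then have "\<forall>j\<ge>1. (z' \<circ> z) (Suc j) - (z' \<circ> z) j \<le> \<tau> * \<tau>1"
    using slow1 slow2 by (rule increments_comp_le)
  then show ?thesis
    using m illusion_witness_comp[OF w1 w2] unfolding is_illusion_tau_def by blast
qed

end
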